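(* Let $n\ge2$ and $\alpha\in\mathbb{Z}_2^n$. Then $$\max_{\beta,\gamma\in\mathbb{Z}_2^n}\mathrm{adp}^{\mathrm{XR}}_1(\alpha,\beta\to\gamma)=\mathrm{adp}^{\oplus}(\alpha,\alpha\to0)=\max_{\beta,\gamma\in\mathbb{Z}_2^n}\mathrm{adp}^{\oplus}(\alpha,\beta\to\gamma).$$
   Context: For $x\in\mathbb{Z}_2^n$, $x=(x_0,\dots,x_{n-1})$ is identified with the integer $\sum_i x_i2^{n-1-i}$; $+$ is addition modulo $2^n$, $\oplus$ is bitwise XOR, $x\lll r=(x_r,\dots,x_{n-1},x_0,\dots,x_{r-1})$. For $f:(\mathbb{Z}_2^n)^2\to\mathbb{Z}_2^n$, $\mathrm{adp}^f(\alpha,\beta\to\gamma)=4^{-n}\#\{(x,y): f(x+\alpha,y+\beta)=f(x,y)+\gamma\}$. $\mathrm{adp}^{\oplus}$ is this for $f(x,y)=x\oplus y$, and $\mathrm{adp}^{\mathrm{XR}}_r$ for $f(x,y)=(x\oplus y)\lll r$. *)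

theory Defs
  imports Main Complex_Main
begin

text \<open>Elements of Z_2^n are identified with naturals in {..<2^n}
 (x = sum x_i 2^(n-1-i)); + is addition mod 2^n, XOR is bitwise.\<close>

definition rotl :: "nat \<Rightarrow> nat \<Rightarrow> nat \<Rightarrow> nat" where
  "rotl n r x = (x * 2 ^ r) mod 2 ^ n + x div 2 ^ (n - r)"

definition adp :: "nat \<Rightarrow> (nat \<Rightarrow> nat \<Rightarrow> nat) \<Rightarrow> nat \<Rightarrow> nat \<Rightarrow> nat \<Rightarrow> real" where
  "adp n f a b g =
     real (card {(x, y). x < 2 ^ n \<and> y < 2 ^ n \<and>
        f ((x + a) mod 2 ^ n) ((y + b) mod 2 ^ n) = (f x y + g) mod 2 ^ n}) / 4 ^ n"

definition adp_xor :: "nat \<Rightarrow> nat \<Rightarrow> nat \<Rightarrow> nat \<Rightarrow> real" where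
  "adp_xor n a b g = adp n (\<lambda>x y. Bit_Operations.xor x y) a b g"

definition adp_XR :: "nat \<Rightarrow> nat \<Rightarrow> nat \<Rightarrow> nat \<Rightarrow> nat \<Rightarrow> real" where
  "adp_XR n r a b g = adp n (\<lambda>x y. rotl n r (Bit_Operations.xor x y)) a b g"

end

theory Submission
  imports Defs
begin

text \<open>
  At bit \<open>t\<close>, the bit of \<open>(x + \<alpha>) \<oplus> (y + \<beta>) \<oplus> ((x \<oplus> y) + \<gamma>)\<close> is the parity of
  \<open>\<alpha>\<^sub>t + \<beta>\<^sub>t + \<gamma>\<^sub>t\<close> and of the carries entering bit \<open>t\<close> in \<open>x + \<alpha>\<close>, \<open>y + \<beta>\<close> and
  \<open>(x \<oplus> y) + \<gamma>\<close>, whatever \<open>x\<^sub>t\<close> and \<open>y\<^sub>t\<close> are. Solutions are therefore counted by an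
  automaton on carry triples: appending a top bit weights the solutions with given outgoing
  carries by the number of choices of \<open>(x\<^sub>t, y\<^sub>t)\<close> producing the required new carries.

  By induction on the word length, for each carry \<open>c\<close> of \<open>x + \<alpha>\<close> and each parity of the two
  other carries there are at most as many solutions as there are solutions for
  \<open>(\<beta>, \<gamma>) = (\<alpha>, 0)\<close> in which \<open>x + \<alpha>\<close> and \<open>y + \<alpha>\<close> both have carry \<open>c\<close>; the inductive step
  compares the weights term by term. Evaluating one more top bit gives
  \<open>adp\<^sup>\<oplus>(\<alpha>, \<beta> \<rightarrow> \<gamma>) \<le> adp\<^sup>\<oplus>(\<alpha>, \<alpha> \<rightarrow> 0)\<close>. Rotation by one moves the top bit of
  \<open>x \<oplus> y\<close> to bit 0, where it is absorbed into \<open>\<gamma>\<close>, so the XR-count splits into four counts on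
  \<open>n - 1\<close> bits that only constrain the parity of the carries of \<open>x + \<alpha>\<close> and \<open>y + \<beta>\<close>. A further
  top-bit evaluation bounds each of them by a quarter of the count behind
  \<open>adp\<^sup>\<oplus>(\<alpha>, \<alpha> \<rightarrow> 0)\<close>, with equality at \<open>(\<beta>, \<gamma>) = (\<alpha>, 0)\<close>.
\<close>

lemma sum_lessThan_2: "(\<Sum>i<(2::nat). f i) = f 0 + f 1"
  by (simp add: numeral_2_eq_2)

lemma sum_lessThan_two_pow_Suc:
  "(\<Sum>x<2 ^ Suc m. f x) = (\<Sum>t<2. \<Sum>l<(2::nat) ^ m. f (l + 2 ^ m * t))"
proof -
  have "(\<Sum>x<2 ^ Suc m. f x) = (\<Sum>t<2. sum f {t * 2 ^ m..<t * 2 ^ m + 2 ^ m})"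
    using sum.nat_group[of f "2 ^ m" 2] by (simp add: mult.commute)
  also have "\<dots> = (\<Sum>t<2. \<Sum>l<(2::nat) ^ m. f (l + 2 ^ m * t))"
    using sum.shift_bounds_nat_ivl[of f 0 "_ * 2 ^ m" "2 ^ m"]
    by (simp add: atLeast0LessThan mult.commute add.commute)
  finally show ?thesis .
qed

lemma sum_pairs_two_pow_Suc:
  fixes f :: "nat \<Rightarrow> nat \<Rightarrow> 'a::comm_monoid_add"
  shows "(\<Sum>x<2 ^ Suc m. \<Sum>y<2 ^ Suc m. f x y)
    = (\<Sum>xt<2. \<Sum>yt<2. \<Sum>xl<2 ^ m. \<Sum>yl<2 ^ m. f (xl + 2 ^ m * xt) (yl + 2 ^ m * yt))"
proof -
  have "(\<Sum>x<2 ^ Suc m. \<Sum>y<2 ^ Suc m. f x y)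
      = (\<Sum>xt<2. \<Sum>xl<2 ^ m. \<Sum>yt<2. \<Sum>yl<2 ^ m. f (xl + 2 ^ m * xt) (yl + 2 ^ m * yt))"
    by (simp only: sum_lessThan_two_pow_Suc)
  then show ?thesis
    by (simp only: sum.swap[where A = "{..<2 ^ m}" and B = "{..<2}"])
qed

lemma sum_swap_outer_pair:
  "(\<Sum>x\<in>X. \<Sum>y\<in>Y. \<Sum>i\<in>I. \<Sum>j\<in>J. \<Sum>k\<in>K. f x y i j k)
     = (\<Sum>i\<in>I. \<Sum>j\<in>J. \<Sum>k\<in>K. \<Sum>x\<in>X. \<Sum>y\<in>Y. f x y i j k)"
  by (simp only: sum.swap[where A = X]) (simp only: sum.swap[where A = Y])

lemma card_pairs_eq_sum:
  "card {(x, y). x < N \<and> y < N \<and> P x y} = (\<Sum>x<N. \<Sum>y<(N::nat). of_bool (P x y))"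
proof -
  have "{(x, y). x < N \<and> y < N \<and> P x y} = Sigma {..<N} (\<lambda>x. {..<N} \<inter> {y. P x y})"
    by auto
  then show ?thesis
    by (simp add: sum.If_cases)
qed

lemma Max_image_eqI:
  "finite S \<Longrightarrow> s \<in> S \<Longrightarrow> (\<And>t. t \<in> S \<Longrightarrow> f t \<le> f s) \<Longrightarrow> Max (f ` S) = f s"
  by (rule Max_eqI) auto

lemma odd_neq_odd_iff: "((odd s1 \<noteq> odd s2) \<longleftrightarrow> odd s3) \<longleftrightarrow> even (s1 + s2 + s3 :: nat)"
  by auto

lemma of_bool_eq_mod_2_iff: "(of_bool P = n mod 2) \<longleftrightarrow> (P \<longleftrightarrow> odd (n :: nat))"
  by (simp add: mod_2_eq_odd)

lemma even_add_add_xor: "even (a + b + xor a (b :: nat))"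
  by (simp add: even_xor_iff)

lemma xor_less_two_pow: "x < 2 ^ m \<Longrightarrow> y < 2 ^ m \<Longrightarrow> xor x y < (2::nat) ^ m"
  by (metis take_bit_nat_eq_self_iff take_bit_xor)

lemma take_bit_Suc_eq_iff:
  "take_bit (Suc m) u = take_bit (Suc m) (v::nat)
     \<longleftrightarrow> take_bit m u = take_bit m v \<and> (bit u m \<longleftrightarrow> bit v m)"
proof
  assume eq: "take_bit (Suc m) u = take_bit (Suc m) v"
  show "take_bit m u = take_bit m v \<and> (bit u m \<longleftrightarrow> bit v m)"
    using arg_cong[OF eq, of "take_bit m"] arg_cong[OF eq, of "\<lambda>z. bit z m"]
    by (simp add: bit_take_bit_iff)
qed (simp add: take_bit_Suc_from_most)

lemma two_pow_Suc_split:
  assumes "a < 2 ^ Suc m"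
  obtains A p :: nat where "a = A + 2 ^ m * p" "A < 2 ^ m" "p < 2"
proof
  show "a = a mod 2 ^ m + 2 ^ m * (a div 2 ^ m)"
    by simp
  show "a mod 2 ^ m < 2 ^ m"
    by simp
  show "a div 2 ^ m < 2"
    using assms by (simp add: div_less_iff_less_mult mult.commute)
qed

lemma
  fixes l t L T :: nat
  shows take_bit_add_high: "take_bit m (l + 2 ^ m * t + (L + 2 ^ m * T)) = take_bit m (l + L)"
    and div_add_high: "(l + 2 ^ m * t + (L + 2 ^ m * T)) div 2 ^ m = t + T + (l + L) div 2 ^ m"
proof -
  have regroup: "l + 2 ^ m * t + (L + 2 ^ m * T) = (l + L) + 2 ^ m * (t + T)"
    by (simp add: algebra_simps)
  show "take_bit m (l + 2 ^ m * t + (L + 2 ^ m * T)) = take_bit m (l + L)"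
    unfolding regroup by (simp add: take_bit_eq_mod)
  show "(l + 2 ^ m * t + (L + 2 ^ m * T)) div 2 ^ m = t + T + (l + L) div 2 ^ m"
    unfolding regroup by simp
qed

lemma xor_add_high:
  assumes "xl < 2 ^ m" "yl < 2 ^ m"
  shows "xor (xl + 2 ^ m * xt) (yl + 2 ^ m * yt) = xor xl yl + 2 ^ m * xor xt (yt :: nat)"
proof -
  have low: "take_bit m (l + 2 ^ m * t) = l" and high: "drop_bit m (l + 2 ^ m * t) = t"
    if "l < 2 ^ m" for l t :: nat
    using that by (simp_all add: take_bit_eq_mod drop_bit_eq_div)
  have "xor (xl + 2 ^ m * xt) (yl + 2 ^ m * yt)
      = push_bit m (drop_bit m (xor (xl + 2 ^ m * xt) (yl + 2 ^ m * yt)))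
        + take_bit m (xor (xl + 2 ^ m * xt) (yl + 2 ^ m * yt))"
    by (rule bits_ident[symmetric])
  also have "\<dots> = xor xl yl + 2 ^ m * xor xt yt"
    by (simp only: take_bit_xor drop_bit_xor low high assms) (simp add: push_bit_eq_mult)
  finally show ?thesis .
qed

section \<open>Counting solutions by their outgoing carries\<close>

definition low_match :: "nat \<Rightarrow> nat \<Rightarrow> nat \<Rightarrow> nat \<Rightarrow> nat \<Rightarrow> nat \<Rightarrow> bool" where
  "low_match m a b g x y \<longleftrightarrow> take_bit m (xor (x + a) (y + b)) = take_bit m (xor x y + g)"

text \<open>For \<open>m\<close>-bit words, \<open>Q\<close> is evaluated at the carries out of bit \<open>m - 1\<close> of \<open>x + a\<close>,
  \<open>y + b\<close> and \<open>(x \<oplus> y) + g\<close>.\<close>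

definition carry_count :: "nat \<Rightarrow> nat \<Rightarrow> nat \<Rightarrow> nat \<Rightarrow> (nat \<Rightarrow> nat \<Rightarrow> nat \<Rightarrow> bool) \<Rightarrow> nat" where
  "carry_count m a b g Q = (\<Sum>x<2 ^ m. \<Sum>y<2 ^ m. of_bool (low_match m a b g x y \<and>
      Q ((x + a) div 2 ^ m) ((y + b) div 2 ^ m) ((xor x y + g) div 2 ^ m)))"

lemma low_match_Suc:
  fixes xl yl xt yt :: nat
  assumes "xl < 2 ^ m" "yl < 2 ^ m"
  shows "low_match (Suc m) (A + 2 ^ m * p) (B + 2 ^ m * q) (G + 2 ^ m * r)
      (xl + 2 ^ m * xt) (yl + 2 ^ m * yt) \<longleftrightarrow>
    low_match m A B G xl yl \<and>
    even (p + q + r + (xl + A) div 2 ^ m + (yl + B) div 2 ^ m + (xor xl yl + G) div 2 ^ m)"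
proof -
  have top_bits: "even (xt + p + c1 + (yt + q + c2) + (xor xt yt + r + c3))
      \<longleftrightarrow> even (p + q + r + c1 + c2 + c3)" for p q r c1 c2 c3 :: nat
  proof -
    have regroup: "xt + p + c1 + (yt + q + c2) + (xor xt yt + r + c3)
        = (xt + yt + xor xt yt) + (p + q + r + c1 + c2 + c3)"
      by simp
    show ?thesis
      unfolding regroup by (rule dvd_add_right_iff[OF even_add_add_xor])
  qed
  show ?thesis
    unfolding low_match_def take_bit_Suc_eq_iff bit_xor_iff
    unfolding bit_iff_odd xor_add_high[OF assms] take_bit_xor take_bit_add_high div_add_high
      odd_neq_odd_iff top_bits ..
qed

lemma carry_count_Suc:
  "carry_count (Suc m) (A + 2 ^ m * p) (B + 2 ^ m * q) (G + 2 ^ m * r) Q =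
    (\<Sum>xt<2. \<Sum>yt<2. carry_count m A B G (\<lambda>i j k. even (p + q + r + i + j + k) \<and>
       Q ((xt + p + i) div 2) ((yt + q + j) div 2) ((xor xt yt + r + k) div 2)))"
proof -
  have div_Suc: "z div 2 ^ Suc m = z div 2 ^ m div 2" for z :: nat
    by (simp only: power_Suc2 div_mult2_eq)
  have point: "of_bool (low_match (Suc m) (A + 2 ^ m * p) (B + 2 ^ m * q) (G + 2 ^ m * r)
        (xl + 2 ^ m * xt) (yl + 2 ^ m * yt) \<and>
      Q ((xl + 2 ^ m * xt + (A + 2 ^ m * p)) div 2 ^ Suc m)
        ((yl + 2 ^ m * yt + (B + 2 ^ m * q)) div 2 ^ Suc m)
        ((xor (xl + 2 ^ m * xt) (yl + 2 ^ m * yt) + (G + 2 ^ m * r)) div 2 ^ Suc m))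
    = (of_bool (low_match m A B G xl yl \<and>
        even (p + q + r + (xl + A) div 2 ^ m + (yl + B) div 2 ^ m + (xor xl yl + G) div 2 ^ m) \<and>
        Q ((xt + p + (xl + A) div 2 ^ m) div 2) ((yt + q + (yl + B) div 2 ^ m) div 2)
          ((xor xt yt + r + (xor xl yl + G) div 2 ^ m) div 2)) :: nat)"
    if "xl < 2 ^ m" "yl < 2 ^ m" for xl yl xt yt
    unfolding low_match_Suc[OF that] xor_add_high[OF that] div_Suc div_add_high
    by (simp add: ac_simps)
  show ?thesis
    unfolding carry_count_def sum_pairs_two_pow_Suc
    by (intro sum.cong refl) (simp only: lessThan_iff point)
qed

definition carry_freq :: "nat \<Rightarrow> nat \<Rightarrow> nat \<Rightarrow> nat \<Rightarrow> nat \<Rightarrow> nat \<Rightarrow> nat \<Rightarrow> nat" where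
  "carry_freq m a b g i j k = carry_count m a b g (\<lambda>i' j' k'. i' = i \<and> j' = j \<and> k' = k)"

lemma carry_count_eq_sum_carry_freq:
  assumes "a < 2 ^ m" "b < 2 ^ m" "g < 2 ^ m"
  shows "carry_count m a b g Q =
    (\<Sum>i<2. \<Sum>j<2. \<Sum>k<2. of_bool (Q i j k) * carry_freq m a b g i j k)"
proof -
  have carry: "(x + c) div 2 ^ m < 2" if "x < 2 ^ m" "c < 2 ^ m" for x c :: nat
    using that by (simp add: div_less_iff_less_mult)
  have point: "of_bool (L \<and> Q c1 c2 c3) =
      (\<Sum>i<2. \<Sum>j<2. \<Sum>k<2. of_bool (Q i j k) * of_bool (L \<and> c1 = i \<and> c2 = j \<and> c3 = k) :: nat)"
    if "c1 < 2" "c2 < 2" "c3 < 2" for L c1 c2 c3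
    using that unfolding less_2_cases_iff by (elim disjE) (auto simp: sum_lessThan_2)
  have "carry_count m a b g Q = (\<Sum>x<2 ^ m. \<Sum>y<2 ^ m. \<Sum>i<2. \<Sum>j<2. \<Sum>k<2.
      of_bool (Q i j k) * of_bool (low_match m a b g x y \<and> (x + a) div 2 ^ m = i \<and>
        (y + b) div 2 ^ m = j \<and> (xor x y + g) div 2 ^ m = k))"
    unfolding carry_count_def
    by (intro sum.cong refl point) (use assms in \<open>auto intro: carry xor_less_two_pow\<close>)
  also have "\<dots> = (\<Sum>i<2. \<Sum>j<2. \<Sum>k<2. of_bool (Q i j k) * carry_freq m a b g i j k)"
    unfolding carry_freq_def carry_count_def
    by (subst sum_swap_outer_pair) (simp only: sum_distrib_left)
  finally show ?thesis .
qed

lemma carry_count_xor_carry: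
  "carry_count m a b 0 Q = carry_count m a b 0 (\<lambda>i j k. Q i j 0)"
proof -
  have "(xor x y + 0) div 2 ^ m = 0" if "x < 2 ^ m" "y < 2 ^ m" for x y :: nat
    using xor_less_two_pow[OF that] by simp
  then show ?thesis
    unfolding carry_count_def by (intro sum.cong refl) simp
qed

lemma carry_freq_xor_carry: "0 < k \<Longrightarrow> carry_freq m a b 0 i j k = 0"
  unfolding carry_freq_def by (subst carry_count_xor_carry) (simp add: carry_count_def)

text \<open>The number of choices of the top bits \<open>xt\<close>, \<open>yt\<close> for which the outgoing carries satisfy
  \<open>Q\<close>, given the top bits \<open>p\<close>, \<open>q\<close>, \<open>r\<close> of \<open>a\<close>, \<open>b\<close>, \<open>g\<close> and the incoming carries \<open>i\<close>, \<open>j\<close>,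
  \<open>k\<close>.\<close>

definition top_weight ::
  "(nat \<Rightarrow> nat \<Rightarrow> nat \<Rightarrow> bool) \<Rightarrow> nat \<Rightarrow> nat \<Rightarrow> nat \<Rightarrow> nat \<Rightarrow> nat \<Rightarrow> nat \<Rightarrow> nat" where
  "top_weight Q p q r i j k = (\<Sum>xt<2. \<Sum>yt<2.
      of_bool (Q ((xt + p + i) div 2) ((yt + q + j) div 2) ((xor xt yt + r + k) div 2)))"

lemma carry_count_Suc_eq_weighted_sum:
  assumes "A < 2 ^ m" "B < 2 ^ m" "G < 2 ^ m"
  shows "carry_count (Suc m) (A + 2 ^ m * p) (B + 2 ^ m * q) (G + 2 ^ m * r) Q =
    (\<Sum>i<2. \<Sum>j<2. \<Sum>k<2. of_bool (even (p + q + r + i + j + k)) *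
       top_weight Q p q r i j k * carry_freq m A B G i j k)"
proof -
  have "carry_count (Suc m) (A + 2 ^ m * p) (B + 2 ^ m * q) (G + 2 ^ m * r) Q =
    (\<Sum>xt<2. \<Sum>yt<2. \<Sum>i<2. \<Sum>j<2. \<Sum>k<2. of_bool (even (p + q + r + i + j + k)) *
      of_bool (Q ((xt + p + i) div 2) ((yt + q + j) div 2) ((xor xt yt + r + k) div 2)) *
      carry_freq m A B G i j k)"
    unfolding carry_count_Suc carry_count_eq_sum_carry_freq[OF assms] of_bool_conj ..
  also have "\<dots> = (\<Sum>i<2. \<Sum>j<2. \<Sum>k<2. of_bool (even (p + q + r + i + j + k)) *
       top_weight Q p q r i j k * carry_freq m A B G i j k)"
    unfolding top_weight_def
    by (subst sum_swap_outer_pair) (simp only: sum_distrib_left sum_distrib_right)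
  finally show ?thesis .
qed

section \<open>Comparison with the diagonal \<open>(\<beta>, \<gamma>) = (\<alpha>, 0)\<close>\<close>

lemma carry_count_Suc_le:
  assumes "a < 2 ^ Suc m" "b < 2 ^ Suc m" "g < 2 ^ Suc m"
    and IH: "\<And>c e. carry_count m (a mod 2 ^ m) (b mod 2 ^ m) (g mod 2 ^ m)
        (\<lambda>i j k. i = c \<and> even (j + k + e))
      \<le> carry_count m (a mod 2 ^ m) (a mod 2 ^ m) 0 (\<lambda>i j k. i = c \<and> j = c)"
    and weight: "\<And>p q r i j k. p < 2 \<Longrightarrow> q < 2 \<Longrightarrow> r < 2 \<Longrightarrow> i < 2 \<Longrightarrow> j < 2 \<Longrightarrow> k < 2 \<Longrightarrow>
      even (p + q + r + i + j + k) \<Longrightarrow> top_weight Q p q r i j k \<le> top_weight Q' p p 0 i i 0"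
  shows "carry_count (Suc m) a b g Q \<le> carry_count (Suc m) a a 0 Q'"
proof -
  obtain A p where a: "a = A + 2 ^ m * p" "A < 2 ^ m" "p < 2"
    using two_pow_Suc_split[OF assms(1)] .
  obtain B q where b: "b = B + 2 ^ m * q" "B < 2 ^ m" "q < 2"
    using two_pow_Suc_split[OF assms(2)] .
  obtain G r where g: "g = G + 2 ^ m * r" "G < 2 ^ m" "r < 2"
    using two_pow_Suc_split[OF assms(3)] .
  note low = a(2) b(2) g(2)
  let ?v = "carry_freq m A B G" and ?w = "carry_freq m A A 0"
  let ?par = "\<lambda>i j k. of_bool (even (p + q + r + i + j + k)) :: nat"
  have zero: "(0 :: nat) < 2 ^ m"
    by simp
  have row: "(\<Sum>j<2. \<Sum>k<2. ?par i j k * ?v i j k) \<le> ?w i i 0" if "i < 2" for i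
  proof -
    have "(\<Sum>j<2. \<Sum>k<2. ?par i j k * ?v i j k)
        = carry_count m A B G (\<lambda>i' j k. i' = i \<and> even (j + k + (p + q + r + i)))"
      unfolding carry_count_eq_sum_carry_freq[OF low]
      using that by (auto simp: sum_lessThan_2 less_2_cases_iff ac_simps)
    also have "\<dots> \<le> carry_count m A A 0 (\<lambda>i' j k. i' = i \<and> j = i)"
      using IH[of i "p + q + r + i"] unfolding a(1) b(1) g(1) by (simp add: low)
    also have "\<dots> = ?w i i 0"
      unfolding carry_count_eq_sum_carry_freq[OF low(1) low(1) zero]
      using that by (auto simp: sum_lessThan_2 less_2_cases_iff carry_freq_xor_carry)
    finally show ?thesis .
  qed
  have "carry_count (Suc m) a b g Q
      = (\<Sum>i<2. \<Sum>j<2. \<Sum>k<2. ?par i j k * top_weight Q p q r i j k * ?v i j k)"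
    unfolding a(1) b(1) g(1) by (rule carry_count_Suc_eq_weighted_sum[OF low])
  also have "\<dots> \<le> (\<Sum>i<2. \<Sum>j<2. \<Sum>k<2. ?par i j k * top_weight Q' p p 0 i i 0 * ?v i j k)"
    by (intro sum_mono mult_right_mono) (auto simp: weight a(3) b(3) g(3))
  also have "\<dots> = (\<Sum>i<2. top_weight Q' p p 0 i i 0 * (\<Sum>j<2. \<Sum>k<2. ?par i j k * ?v i j k))"
    by (simp only: sum_distrib_left mult_ac)
  also have "\<dots> \<le> (\<Sum>i<2. top_weight Q' p p 0 i i 0 * ?w i i 0)"
    by (intro sum_mono mult_left_mono row) auto
  also have "\<dots> \<le> (\<Sum>i<2. \<Sum>j<2. \<Sum>k<2.
      of_bool (even (p + p + 0 + i + j + k)) * top_weight Q' p p 0 i j k * ?w i j k)"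
    by (auto simp: sum_lessThan_2)
  also have "\<dots> = carry_count (Suc m) a a (0 + 2 ^ m * 0) Q'"
    unfolding a(1) by (rule carry_count_Suc_eq_weighted_sum[OF low(1) low(1) zero, symmetric])
  finally show ?thesis
    by simp
qed

text \<open>Both bounds are finite checks in which only \<open>p + i = 1\<close> needs thought: then the carry
  out of \<open>xt + p + i\<close> is \<open>xt\<close> itself. In the first bound this fixes \<open>xt\<close>, and the parity
  hypothesis makes exactly one of \<open>(yt + q + j) div 2\<close> and \<open>(xor xt yt + r + k) div 2\<close> depend
  on \<open>yt\<close>, so exactly one \<open>yt\<close> qualifies; in the second, each \<open>yt\<close> admits exactly one \<open>xt\<close>.\<close>

lemma top_weight_le_diagonal:
  assumes "p < 2" "q < 2" "r < 2" "i < 2" "j < 2" "k < 2" "even (p + q + r + i + j + k)"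
  shows "top_weight (\<lambda>i j k. i = c \<and> even (j + k + e)) p q r i j k
    \<le> top_weight (\<lambda>i j k. i = c \<and> j = c) p p 0 i i 0"
  using assms unfolding less_2_cases_iff
  by (elim disjE) (auto simp: top_weight_def sum_lessThan_2)

lemma top_weight_parity_le:
  assumes "p < 2" "q < 2" "r < 2" "i < 2" "j < 2" "k < 2" "even (p + q + r + i + j + k)"
  shows "top_weight (\<lambda>i j k. even (i + j + e)) p q r i j k
    \<le> top_weight (\<lambda>i j k. even (i + j)) p p 0 i i 0"
  using assms unfolding less_2_cases_iff
  by (elim disjE) (auto simp: top_weight_def sum_lessThan_2)

lemma carry_count_le_diagonal:
  "a < 2 ^ m \<Longrightarrow> b < 2 ^ m \<Longrightarrow> g < 2 ^ m \<Longrightarrow>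
    carry_count m a b g (\<lambda>i j k. i = c \<and> even (j + k + e))
      \<le> carry_count m a a 0 (\<lambda>i j k. i = c \<and> j = c)"
proof (induction m arbitrary: a b g c e)
  case 0
  then show ?case
    by (simp add: carry_count_def low_match_def)
next
  case (Suc m)
  show ?case
    by (rule carry_count_Suc_le[OF Suc.prems Suc.IH top_weight_le_diagonal]) simp_all
qed

lemma carry_count_parity_le:
  assumes "a < 2 ^ Suc m" "b < 2 ^ Suc m" "g < 2 ^ Suc m"
  shows "carry_count (Suc m) a b g (\<lambda>i j k. even (i + j + e))
    \<le> carry_count (Suc m) a a 0 (\<lambda>i j k. even (i + j))"
  by (rule carry_count_Suc_le[OF assms carry_count_le_diagonal top_weight_parity_le]) simp_all

lemma carry_count_all_le:
  assumes "a < 2 ^ Suc m" "b < 2 ^ Suc m" "g < 2 ^ Suc m"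
  shows "carry_count (Suc m) a b g (\<lambda>_ _ _. True) \<le> carry_count (Suc m) a a 0 (\<lambda>_ _ _. True)"
  by (rule carry_count_Suc_le[OF assms carry_count_le_diagonal]) (simp_all add: top_weight_def)

lemma carry_count_all_diagonal:
  "carry_count (Suc m) (A + 2 ^ m * p) (A + 2 ^ m * p) 0 (\<lambda>_ _ _. True)
    = 4 * carry_count m A A 0 (\<lambda>i j k. even (i + j))"
proof -
  have top: "carry_count m A A 0 (\<lambda>i j k. even (p + p + 0 + i + j + k) \<and>
      (\<lambda>_ _ _. True) ((xt + p + i) div 2) ((yt + p + j) div 2) ((xor xt yt + 0 + k) div 2))
    = carry_count m A A 0 (\<lambda>i j k. even (i + j))" for xt yt :: nat
    by (subst carry_count_xor_carry) simp
  show ?thesis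
    using carry_count_Suc[of m A p A p 0 0 "\<lambda>_ _ _. True"] by (simp only: top) simp
qed

section \<open>Rotation by one bit\<close>

lemma rotl_1_Suc:
  assumes "l < 2 ^ m" "t < 2"
  shows "rotl (Suc m) 1 (l + 2 ^ m * t) = 2 * l + t"
proof -
  have "(l + 2 ^ m * t) * 2 ^ 1 = 2 * l + 2 ^ Suc m * t"
    by simp
  moreover have "2 * l < 2 ^ Suc m"
    using assms by simp
  ultimately have "(l + 2 ^ m * t) * 2 ^ 1 mod 2 ^ Suc m = 2 * l"
    by (simp only: mod_mult_self2 mod_less)
  moreover have "(l + 2 ^ m * t) div 2 ^ (Suc m - 1) = t"
    using assms by simp
  ultimately show ?thesis
    unfolding rotl_def by simp
qed

lemma double_add_eq_mod_iff:
  assumes "l < 2 ^ m" "t < 2"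
  shows "2 * l + t = N mod 2 ^ Suc m \<longleftrightarrow> t = N mod 2 \<and> l = N div 2 mod (2 ^ m :: nat)"
proof -
  have digits: "2 * l + t = 2 * L + T \<longleftrightarrow> t = T \<and> l = L" if "T < 2" for L T :: nat
    using that assms(2) by presburger
  have "N mod 2 ^ Suc m = 2 * (N div 2 mod 2 ^ m) + N mod 2"
    by (simp add: mod_mult2_eq)
  then show ?thesis
    using digits[of "N mod 2"] by simp
qed

lemma xor_add_mod_two_pow_Suc:
  fixes xl yl xt yt A B p q :: nat
  shows "xor ((xl + 2 ^ m * xt + (A + 2 ^ m * p)) mod 2 ^ Suc m)
      ((yl + 2 ^ m * yt + (B + 2 ^ m * q)) mod 2 ^ Suc m)
    = take_bit m (xor (xl + A) (yl + B))
      + 2 ^ m * of_bool (odd (xt + p + (xl + A) div 2 ^ m) \<noteq> odd (yt + q + (yl + B) div 2 ^ m))"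
    (is "?lhs = _")
proof -
  let ?u = "xor (xl + 2 ^ m * xt + (A + 2 ^ m * p)) (yl + 2 ^ m * yt + (B + 2 ^ m * q))"
  have "?lhs = take_bit (Suc m) ?u"
    by (simp only: take_bit_eq_mod[symmetric] take_bit_xor)
  also have "\<dots> = 2 ^ m * of_bool (bit ?u m) + take_bit m ?u"
    by (rule take_bit_Suc_from_most)
  finally show ?thesis
    unfolding bit_xor_iff
    unfolding bit_iff_odd take_bit_xor take_bit_add_high div_add_high
    by simp
qed

text \<open>After rotation, the top bit of \<open>x \<oplus> y\<close> sits at bit 0 and is added to \<open>g\<close>; the
  carry it produces enters the low part as \<open>(xor xt yt + g) div 2\<close>.\<close>

lemma rotl_xor_match_Suc:
  fixes xl yl xt yt :: nat
  assumes "xl < 2 ^ m" "yl < 2 ^ m" "xt < 2" "yt < 2"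
  shows "rotl (Suc m) 1 (xor ((xl + 2 ^ m * xt + (A + 2 ^ m * p)) mod 2 ^ Suc m)
        ((yl + 2 ^ m * yt + (B + 2 ^ m * q)) mod 2 ^ Suc m))
      = (rotl (Suc m) 1 (xor (xl + 2 ^ m * xt) (yl + 2 ^ m * yt)) + g) mod 2 ^ Suc m
    \<longleftrightarrow> low_match m A B ((xor xt yt + g) div 2 mod 2 ^ m) xl yl \<and>
      even (p + q + g + (xl + A) div 2 ^ m + (yl + B) div 2 ^ m)"
proof -
  define c1 where "c1 = (xl + A) div 2 ^ m"
  define c2 where "c2 = (yl + B) div 2 ^ m"
  define L where "L = take_bit m (xor (xl + A) (yl + B))"
  define T :: nat where "T = of_bool (odd (xt + p + c1) \<noteq> odd (yt + q + c2))"
  have split: "xor ((xl + 2 ^ m * xt + (A + 2 ^ m * p)) mod 2 ^ Suc m)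
      ((yl + 2 ^ m * yt + (B + 2 ^ m * q)) mod 2 ^ Suc m) = L + 2 ^ m * T"
    unfolding xor_add_mod_two_pow_Suc L_def T_def c1_def c2_def by simp
  have L_less: "L < 2 ^ m" and T_less: "T < 2"
    by (simp_all add: L_def T_def xor_less_two_pow)
  have "xor xt yt < 2"
    using xor_less_two_pow[of xt 1 yt] assms(3,4) by simp
  then have rotl_xor: "rotl (Suc m) 1 (xor (xl + 2 ^ m * xt) (yl + 2 ^ m * yt))
      = 2 * xor xl yl + xor xt yt"
    unfolding xor_add_high[OF assms(1,2)] by (intro rotl_1_Suc xor_less_two_pow assms(1,2))
  have low: "L = (2 * xor xl yl + xor xt yt + g) div 2 mod 2 ^ m
      \<longleftrightarrow> low_match m A B ((xor xt yt + g) div 2 mod 2 ^ m) xl yl"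
  proof -
    have "(2 * xor xl yl + xor xt yt + g) div 2 = xor xl yl + (xor xt yt + g) div 2"
      by simp
    then show ?thesis
      unfolding L_def low_match_def by (simp add: take_bit_eq_mod mod_add_right_eq)
  qed
  have top: "T = (2 * xor xl yl + xor xt yt + g) mod 2 \<longleftrightarrow> even (p + q + g + c1 + c2)"
  proof -
    have regroup: "xt + p + c1 + (yt + q + c2) + (2 * xor xl yl + xor xt yt + g)
        = (xt + yt + xor xt yt) + (2 * xor xl yl + (p + q + g + c1 + c2))"
      by simp
    show ?thesis
      unfolding T_def of_bool_eq_mod_2_iff odd_neq_odd_iff regroup
      unfolding dvd_add_right_iff[OF even_add_add_xor] by simp
  qed
  show ?thesis
    unfolding split rotl_1_Suc[OF L_less T_less] rotl_xor double_add_eq_mod_iff[OF L_less T_less]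
      low top c1_def[symmetric] c2_def[symmetric]
    by (rule conj_commute)
qed

lemma card_xor_eq_carry_count:
  "card {(x, y). x < 2 ^ n \<and> y < 2 ^ n \<and>
      xor ((x + a) mod 2 ^ n) ((y + b) mod 2 ^ n) = (xor x y + g) mod 2 ^ n}
    = carry_count n a b g (\<lambda>_ _ _. True)"
  unfolding card_pairs_eq_sum carry_count_def low_match_def take_bit_eq_mod[symmetric] take_bit_xor
  by simp

lemma card_rotl_xor_Suc:
  "card {(x, y). x < 2 ^ Suc m \<and> y < 2 ^ Suc m \<and>
      rotl (Suc m) 1 (xor ((x + (A + 2 ^ m * p)) mod 2 ^ Suc m) ((y + (B + 2 ^ m * q)) mod 2 ^ Suc m))
        = (rotl (Suc m) 1 (xor x y) + g) mod 2 ^ Suc m}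
    = (\<Sum>xt<2. \<Sum>yt<2.
        carry_count m A B ((xor xt yt + g) div 2 mod 2 ^ m) (\<lambda>i j k. even (p + q + g + i + j)))"
  unfolding card_pairs_eq_sum sum_pairs_two_pow_Suc carry_count_def
  by (intro sum.cong refl) (simp only: lessThan_iff rotl_xor_match_Suc)

lemma adp_xor_eq_carry_count:
  "adp_xor n a b g = carry_count n a b g (\<lambda>_ _ _. True) / 4 ^ n"
  unfolding adp_xor_def adp_def card_xor_eq_carry_count ..

lemma adp_XR_1_eq_sum:
  "adp_XR (Suc m) 1 (A + 2 ^ m * p) (B + 2 ^ m * q) g = (\<Sum>xt<2. \<Sum>yt<2.
      carry_count m A B ((xor xt yt + g) div 2 mod 2 ^ m) (\<lambda>i j k. even (p + q + g + i + j)))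
    / 4 ^ Suc m"
  unfolding adp_XR_def adp_def card_rotl_xor_Suc ..

lemma adp_xor_le_peak:
  assumes "a < 2 ^ Suc m" "b < 2 ^ Suc m" "g < 2 ^ Suc m"
  shows "adp_xor (Suc m) a b g \<le> adp_xor (Suc m) a a 0"
  unfolding adp_xor_eq_carry_count
  using carry_count_all_le[OF assms] by (simp add: divide_right_mono)

lemma adp_XR_1_peak:
  assumes "a < 2 ^ Suc m"
  shows "adp_XR (Suc m) 1 a a 0 = adp_xor (Suc m) a a 0"
proof -
  obtain A p where a: "a = A + 2 ^ m * p" "A < 2 ^ m" "p < 2"
    using two_pow_Suc_split[OF assms] .
  have "carry_count m A A 0 (\<lambda>i j k. even (p + p + 0 + i + j))
      = carry_count m A A 0 (\<lambda>i j k. even (i + j))"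
    by simp
  then show ?thesis
    unfolding a(1) adp_XR_1_eq_sum adp_xor_eq_carry_count carry_count_all_diagonal
    by (simp add: sum_lessThan_2)
qed

lemma adp_XR_1_le_peak:
  assumes "a < 2 ^ Suc (Suc m)" "b < 2 ^ Suc (Suc m)"
  shows "adp_XR (Suc (Suc m)) 1 a b g \<le> adp_xor (Suc (Suc m)) a a 0"
proof -
  obtain A p where a: "a = A + 2 ^ Suc m * p" "A < 2 ^ Suc m" "p < 2"
    using two_pow_Suc_split[OF assms(1)] .
  obtain B q where b: "b = B + 2 ^ Suc m * q" "B < 2 ^ Suc m" "q < 2"
    using two_pow_Suc_split[OF assms(2)] .
  define D where "D = carry_count (Suc m) A A 0 (\<lambda>i j k. even (i + j))"
  have "carry_count (Suc m) A B ((xor xt yt + g) div 2 mod 2 ^ Suc m)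
      (\<lambda>i j k. even (p + q + g + i + j)) \<le> D" for xt yt
    using carry_count_parity_le[OF a(2) b(2), of "(xor xt yt + g) div 2 mod 2 ^ Suc m" "p + q + g"]
    by (simp add: D_def ac_simps)
  then have "(\<Sum>xt<2. \<Sum>yt<2. carry_count (Suc m) A B ((xor xt yt + g) div 2 mod 2 ^ Suc m)
      (\<lambda>i j k. even (p + q + g + i + j))) \<le> (\<Sum>xt<(2::nat). \<Sum>yt<(2::nat). D)"
    by (intro sum_mono)
  also have "\<dots> = 4 * D"
    by simp
  finally have bound: "(\<Sum>xt<2. \<Sum>yt<2. carry_count (Suc m) A B
      ((xor xt yt + g) div 2 mod 2 ^ Suc m) (\<lambda>i j k. even (p + q + g + i + j))) \<le> 4 * D" .
  show ?thesis
    unfolding a(1) b(1) adp_XR_1_eq_sum adp_xor_eq_carry_count carry_count_all_diagonal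
      D_def[symmetric]
    by (rule divide_right_mono[OF of_nat_mono[OF bound]]) simp
qed

theorem corollary3:
  fixes n \<alpha> :: nat
  assumes "n \<ge> 2" and "\<alpha> < 2 ^ n"
  shows "Max ((\<lambda>(\<beta>, \<gamma>). adp_XR n 1 \<alpha> \<beta> \<gamma>) ` ({..<2 ^ n} \<times> {..<2 ^ n}))
           = adp_xor n \<alpha> \<alpha> 0
       \<and> adp_xor n \<alpha> \<alpha> 0
           = Max ((\<lambda>(\<beta>, \<gamma>). adp_xor n \<alpha> \<beta> \<gamma>) ` ({..<2 ^ n} \<times> {..<2 ^ n}))"
proof -
  obtain m where n: "n = Suc (Suc m)"
    using le_Suc_ex[OF assms(1)] by auto
  have \<alpha>: "\<alpha> < 2 ^ Suc (Suc m)"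
    using assms(2) unfolding n .
  have XR_peak: "adp_XR n 1 \<alpha> \<alpha> 0 = adp_xor n \<alpha> \<alpha> 0"
    unfolding n by (rule adp_XR_1_peak[OF \<alpha>])
  have XR_le: "adp_XR n 1 \<alpha> \<beta> \<gamma> \<le> adp_xor n \<alpha> \<alpha> 0" if "\<beta> < 2 ^ n" for \<beta> \<gamma>
    unfolding n by (rule adp_XR_1_le_peak[OF \<alpha> that[unfolded n]])
  have xor_le: "adp_xor n \<alpha> \<beta> \<gamma> \<le> adp_xor n \<alpha> \<alpha> 0" if "\<beta> < 2 ^ n" "\<gamma> < 2 ^ n" for \<beta> \<gamma>
    unfolding n by (rule adp_xor_le_peak[OF \<alpha> that[unfolded n]])
  let ?S = "{..<(2::nat) ^ n} \<times> {..<(2::nat) ^ n}"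
  have S: "finite ?S" "(\<alpha>, 0) \<in> ?S"
    using assms(2) by auto
  have "Max ((\<lambda>(\<beta>, \<gamma>). adp_XR n 1 \<alpha> \<beta> \<gamma>) ` ?S) = adp_XR n 1 \<alpha> \<alpha> 0"
    by (rule Max_image_eqI[OF S, of "\<lambda>(\<beta>, \<gamma>). adp_XR n 1 \<alpha> \<beta> \<gamma>", unfolded prod.case])
      (use XR_le XR_peak in auto)
  moreover have "Max ((\<lambda>(\<beta>, \<gamma>). adp_xor n \<alpha> \<beta> \<gamma>) ` ?S) = adp_xor n \<alpha> \<alpha> 0"
    by (rule Max_image_eqI[OF S, of "\<lambda>(\<beta>, \<gamma>). adp_xor n \<alpha> \<beta> \<gamma>", unfolded prod.case])
      (use xor_le in auto)
  ultimately show ?thesis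
    unfolding XR_peak by simp
qed

end
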